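(* Let $(\xi_t)_{t\ge0}$ be a standard Brownian motion started at $0$ under a probability measure $P$. Then for any $\delta>0$, $k>0$ and $t\ge0$, \[P\Big(\int_0^t\mathbf 1_{\{\xi_s\in(-\delta,\delta)\}}ds>k\Big)\le 3e^{t/2-k/(4\delta)}.\] *)

theory Defs
  imports "HOL-Probability.Probability"
begin

definition std_brownian_motion :: "'a measure \<Rightarrow> (real \<Rightarrow> 'a \<Rightarrow> real) \<Rightarrow> bool" where
  "std_brownian_motion M xi \<longleftrightarrow>
     prob_space M \<and>
     (\<forall>t\<ge>0. xi t \<in> borel_measurable M) \<and>
     (\<forall>\<omega>\<in>space M. xi 0 \<omega> = 0) \<and>
     (\<forall>\<omega>\<in>space M. continuous_on {0..} (\<lambda>t. xi t \<omega>)) \<and>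
     (\<forall>s t. 0 \<le> s \<and> s < t \<longrightarrow>
        distributed M lborel (\<lambda>\<omega>. xi t \<omega> - xi s \<omega>)
          (\<lambda>x. ennreal (normal_density 0 (sqrt (t - s)) x))) \<and>
     (\<forall>ts :: real list. sorted_wrt (<) ts \<and> (\<forall>u\<in>set ts. 0 \<le> u) \<longrightarrow>
        prob_space.indep_vars M (\<lambda>_. borel)
          (\<lambda>i \<omega>. xi (ts ! Suc i) \<omega> - xi (ts ! i) \<omega>) {..<length ts - 1})"

end

(*
  Discretise time with mesh h = t/N.  Since the paths are continuous, Fatou's lemma bounds the
  occupation time of (-\<delta>, \<delta>) by the liminf of the Riemann sums S_N = h * #{j \<le> N. |xi (j h)| < \<delta>},
  so it suffices to bound P(S_N > k) uniformly for fine meshes.  By Chernoff with parameter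
  1/(4\<delta>), P(S_N > k) \<le> e^(-k/(4\<delta>)) E(\<Prod>j (1 + a 1{|xi (j h)| < \<delta>})) with a = e^(h/(4\<delta>)) - 1.
  Expanding the product, every term is the probability that xi lies in (-\<delta>, \<delta>) at finitely many
  grid times; by independence of the increments it is at most the product over consecutive gaps u
  of the Gaussian small-ball bound 2\<delta>/sqrt(2\<pi>u).  Charging each gap g of the grid the weight
  e^(-gh/2), at a total cost of at most e^(Nh/2) = e^(t/2), turns the sum over all subsets of the
  grid into a renewal series whose ratio R is at most 2/3 for small h; the sum is then at most
  1/(1 - R) \<le> 3.
*)

theory Submission
  imports Defs
begin

fun gap_prod :: "('a::minus \<Rightarrow> real) \<Rightarrow> 'a \<Rightarrow> 'a list \<Rightarrow> real" where
  "gap_prod f q [] = 1"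
| "gap_prod f q (j # js) = f (j - q) * gap_prod f j js"

lemma gap_prod_snoc: "gap_prod f q (js @ [x]) = gap_prod f q js * f (x - last (q # js))"
  by (induction js arbitrary: q) auto

lemma gap_prod_nonneg: "(\<And>g. 0 \<le> f g) \<Longrightarrow> 0 \<le> gap_prod f q js"
  by (induction js arbitrary: q) auto

lemma gap_prod_mult: "gap_prod (\<lambda>g. f g * w g) q js = gap_prod f q js * gap_prod w q js"
  by (induction js arbitrary: q) auto

lemma gap_prod_const: "gap_prod (\<lambda>_. a) q js = a ^ length js"
  by (induction js arbitrary: q) auto

lemma gap_prod_exp:
  "sorted_wrt (<) (q # js) \<Longrightarrow>
     gap_prod (\<lambda>g. exp (c * real g)) q js = exp (c * (real (last (q # js)) - real q))"
proof (induction js arbitrary: q)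
  case (Cons j js)
  then show ?case by (simp add: of_nat_diff algebra_simps flip: exp_add)
qed simp

lemma gap_prod_le_exp_mult_weighted:
  assumes sorted: "sorted_wrt (<) (0 # js)" and "set js \<subseteq> {..N}" and "0 \<le> \<theta>" and "\<And>g. 0 \<le> f g"
  shows "gap_prod f 0 js \<le> exp (real N * \<theta>) * gap_prod (\<lambda>g. f g * exp (- (real g * \<theta>))) 0 js"
proof -
  define q where "q = last (0 # js)"
  have "q \<le> N"
    using assms(2) by (cases js rule: rev_cases) (auto simp: q_def)
  have "gap_prod (\<lambda>g. f g * exp (- (real g * \<theta>))) 0 js = gap_prod f 0 js * exp (- (real q * \<theta>))"
    using gap_prod_exp[OF sorted, of "- \<theta>"] by (simp add: gap_prod_mult q_def mult.commute)
  moreover have "1 \<le> exp (real N * \<theta>) * exp (- (real q * \<theta>))"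
    using \<open>q \<le> N\<close> \<open>0 \<le> \<theta>\<close> by (simp add: mult_right_mono flip: exp_add)
  ultimately show ?thesis
    using mult_left_mono[of 1 "exp (real N * \<theta>) * exp (- (real q * \<theta>))" "gap_prod f 0 js"]
      gap_prod_nonneg[of f, OF assms(4)] by (simp add: ac_simps)
qed

lemma gap_prod_conv_prod_nth:
  "gap_prod f q ss = (\<Prod>i<length ss. f ((q # ss) ! Suc i - (q # ss) ! i))"
  by (induction ss arbitrary: q) (simp_all add: prod.lessThan_Suc_shift del: prod.lessThan_Suc)

lemma gap_prod_map:
  assumes "sorted_wrt (<) (q # js)" and "\<And>i j. i < j \<Longrightarrow> g j - g i = g (j - i)"
  shows "gap_prod f (g q) (map g js) = gap_prod (f \<circ> g) q js"
  using assms(1) by (induction js arbitrary: q) (simp_all add: assms(2))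

text \<open>Expanding \<open>\<Prod>j\<in>{p<..N}. 1 + c j\<close> index by index, \<open>\<Psi> (p - q)\<close> bounds the total weight
  of all continuations of a chosen index list ending at \<open>q\<close>; the recursion for \<open>\<Psi>\<close> is the case
  distinction on whether the next index \<open>Suc p\<close> is chosen.\<close>

lemma nn_integral_prod_one_plus_le_potential:
  fixes c :: "nat \<Rightarrow> 'a \<Rightarrow> ennreal" and r \<Psi> :: "nat \<Rightarrow> real"
  assumes [measurable]: "\<And>j. c j \<in> borel_measurable M"
    and r: "\<And>g. 0 \<le> r g" and "0 \<le> C"
    and moments: "\<And>js. sorted_wrt (<) (0 # js) \<Longrightarrow> set js \<subseteq> {..N} \<Longrightarrow>
        (\<integral>\<^sup>+\<omega>. (\<Prod>j\<in>set js. c j \<omega>) \<partial>M) \<le> ennreal (C * gap_prod r 0 js)"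
    and \<Psi>_ge_1: "\<And>d. 1 \<le> \<Psi> d" and \<Psi>_Suc: "\<And>d. d < N \<Longrightarrow> \<Psi> d = \<Psi> (Suc d) + r (Suc d) * \<Psi> 0"
    and "p \<le> N" and "sorted_wrt (<) (0 # js)" and "set js \<subseteq> {..p}"
  shows "(\<integral>\<^sup>+\<omega>. (\<Prod>j\<in>set js. c j \<omega>) * (\<Prod>j\<in>{p<..N}. 1 + c j \<omega>) \<partial>M)
           \<le> ennreal (C * gap_prod r 0 js * \<Psi> (p - last (0 # js)))"
  using \<open>p \<le> N\<close> \<open>sorted_wrt (<) (0 # js)\<close> \<open>set js \<subseteq> {..p}\<close>
proof (induction p arbitrary: js rule: inc_induct)
  case base
  have "(\<integral>\<^sup>+\<omega>. (\<Prod>j\<in>set js. c j \<omega>) * (\<Prod>j\<in>{N<..N}. 1 + c j \<omega>) \<partial>M) \<le> ennreal (C * gap_prod r 0 js)"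
    using base by (simp add: moments)
  also have "\<dots> \<le> ennreal (C * gap_prod r 0 js * \<Psi> (N - last (0 # js)))"
    using mult_left_mono[OF \<Psi>_ge_1, of "C * gap_prod r 0 js"] \<open>0 \<le> C\<close> gap_prod_nonneg[of r, OF r]
    by (intro ennreal_leI) simp
  finally show ?case .
next
  case (step p)
  define q where "q = last (0 # js)"
  have "q \<le> p"
    using step.prems by (cases js rule: rev_cases) (auto simp: q_def)
  define X where "X js' \<omega> = (\<Prod>j\<in>set js'. c j \<omega>)" for js' \<omega>
  define Y where "Y \<omega> = (\<Prod>j\<in>{Suc p<..N}. 1 + c j \<omega>)" for \<omega>
  have "{p<..N} = insert (Suc p) {Suc p<..N}" and "Suc p \<notin> set js"
    using step.hyps step.prems by auto
  then have split: "X js \<omega> * (\<Prod>j\<in>{p<..N}. 1 + c j \<omega>) = X js \<omega> * Y \<omega> + X (js @ [Suc p]) \<omega> * Y \<omega>" for \<omega>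
    by (simp add: X_def Y_def algebra_simps)
  have sorted': "sorted_wrt (<) (0 # js @ [Suc p])"
    using step.prems by (auto simp: sorted_wrt_append less_Suc_eq_le)
  have "set js \<subseteq> {..Suc p}" "set (js @ [Suc p]) \<subseteq> {..Suc p}"
    using step.prems by auto
  then have IH: "(\<integral>\<^sup>+\<omega>. X js \<omega> * Y \<omega> \<partial>M) \<le> ennreal (C * gap_prod r 0 js * \<Psi> (Suc p - q))"
    "(\<integral>\<^sup>+\<omega>. X (js @ [Suc p]) \<omega> * Y \<omega> \<partial>M) \<le> ennreal (C * gap_prod r 0 (js @ [Suc p]) * \<Psi> 0)"
    using step.IH[of js] step.IH[OF sorted'] step.prems unfolding X_def Y_def q_def by simp_all
  have "(\<integral>\<^sup>+\<omega>. X js \<omega> * (\<Prod>j\<in>{p<..N}. 1 + c j \<omega>) \<partial>M)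
      = (\<integral>\<^sup>+\<omega>. X js \<omega> * Y \<omega> \<partial>M) + (\<integral>\<^sup>+\<omega>. X (js @ [Suc p]) \<omega> * Y \<omega> \<partial>M)"
    unfolding split by (rule nn_integral_add) (simp_all add: X_def Y_def)
  also have "\<dots> \<le> ennreal (C * gap_prod r 0 js * \<Psi> (Suc p - q)) + ennreal (C * gap_prod r 0 (js @ [Suc p]) * \<Psi> 0)"
    using IH by (rule add_mono)
  also have "\<dots> = ennreal (C * gap_prod r 0 js * \<Psi> (p - q))"
  proof -
    have "\<Psi> (p - q) = \<Psi> (Suc p - q) + r (Suc p - q) * \<Psi> 0"
      using \<Psi>_Suc[of "p - q"] step.hyps \<open>q \<le> p\<close> by (simp add: Suc_diff_le)
    then show ?thesis
      using \<open>0 \<le> C\<close> gap_prod_nonneg[of r, OF r] r[of "Suc p - q"] \<Psi>_ge_1[of "Suc p - q"] \<Psi>_ge_1[of 0]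
      by (simp add: gap_prod_snoc q_def algebra_simps flip: ennreal_plus)
  qed
  finally show ?case
    unfolding X_def q_def .
qed

lemma nn_integral_prod_one_plus_le:
  fixes c :: "nat \<Rightarrow> 'a \<Rightarrow> ennreal" and r :: "nat \<Rightarrow> real"
  assumes [measurable]: "\<And>j. c j \<in> borel_measurable M"
    and r: "\<And>g. 0 \<le> r g" and R: "(\<Sum>g=1..N. r g) < 1" and "0 \<le> C"
    and moments: "\<And>js. sorted_wrt (<) (0 # js) \<Longrightarrow> set js \<subseteq> {..N} \<Longrightarrow>
        (\<integral>\<^sup>+\<omega>. (\<Prod>j\<in>set js. c j \<omega>) \<partial>M) \<le> ennreal (C * gap_prod r 0 js)"
  shows "(\<integral>\<^sup>+\<omega>. (\<Prod>j\<in>{0<..N}. 1 + c j \<omega>) \<partial>M) \<le> ennreal (C / (1 - (\<Sum>g=1..N. r g)))"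
proof -
  define K where "K = 1 / (1 - (\<Sum>g=1..N. r g))"
  define \<Psi> where "\<Psi> d = 1 + K * (\<Sum>g\<in>{d<..N}. r g)" for d
  have "0 < K"
    using R by (simp add: K_def)
  have "{0<..N} = {1..N}"
    by auto
  then have \<Psi>_0: "\<Psi> 0 = K"
    using R by (simp add: \<Psi>_def K_def field_simps)
  have "(\<integral>\<^sup>+\<omega>. (\<Prod>j\<in>set []. c j \<omega>) * (\<Prod>j\<in>{0<..N}. 1 + c j \<omega>) \<partial>M)
      \<le> ennreal (C * gap_prod r 0 [] * \<Psi> (0 - last [0]))"
  proof (rule nn_integral_prod_one_plus_le_potential[OF _ r \<open>0 \<le> C\<close> moments])
    show "1 \<le> \<Psi> d" for d
      using \<open>0 < K\<close> r by (simp add: \<Psi>_def sum_nonneg)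
    show "\<Psi> d = \<Psi> (Suc d) + r (Suc d) * \<Psi> 0" if "d < N" for d
    proof -
      have "{d<..N} = insert (Suc d) {Suc d<..N}"
        using that by auto
      then have "\<Psi> d = \<Psi> (Suc d) + r (Suc d) * K"
        by (simp add: \<Psi>_def algebra_simps)
      then show ?thesis
        by (simp add: \<Psi>_0)
    qed
  qed simp_all
  then show ?thesis
    by (simp add: \<Psi>_0 K_def)
qed

section \<open>Small-ball probabilities of Brownian motion\<close>

lemma std_brownian_motion_prob_space: "std_brownian_motion M xi \<Longrightarrow> prob_space M"
  by (simp add: std_brownian_motion_def)

lemma std_brownian_motion_measurable: "std_brownian_motion M xi \<Longrightarrow> 0 \<le> t \<Longrightarrow> xi t \<in> borel_measurable M"
  by (simp add: std_brownian_motion_def)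

lemma std_brownian_motion_start: "std_brownian_motion M xi \<Longrightarrow> \<omega> \<in> space M \<Longrightarrow> xi 0 \<omega> = 0"
  by (simp add: std_brownian_motion_def)

lemma std_brownian_motion_continuous:
  "std_brownian_motion M xi \<Longrightarrow> \<omega> \<in> space M \<Longrightarrow> continuous_on {0..} (\<lambda>t. xi t \<omega>)"
  by (simp add: std_brownian_motion_def)

lemma std_brownian_motion_increment_distributed:
  "std_brownian_motion M xi \<Longrightarrow> 0 \<le> s \<Longrightarrow> s < t \<Longrightarrow>
     distributed M lborel (\<lambda>\<omega>. xi t \<omega> - xi s \<omega>) (\<lambda>x. ennreal (normal_density 0 (sqrt (t - s)) x))"
  by (simp add: std_brownian_motion_def)

lemma std_brownian_motion_increments_indep:
  "std_brownian_motion M xi \<Longrightarrow> sorted_wrt (<) ts \<Longrightarrow> \<forall>u\<in>set ts. 0 \<le> u \<Longrightarrow>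
     prob_space.indep_vars M (\<lambda>_. borel) (\<lambda>i \<omega>. xi (ts ! Suc i) \<omega> - xi (ts ! i) \<omega>) {..<length ts - 1}"
  by (simp add: std_brownian_motion_def)

lemma sets_PiM_partial_sums_bounded:
  fixes Q :: "nat \<Rightarrow> real measure"
  assumes "\<And>i. sets (Q i) = sets borel"
  shows "{y \<in> space (PiM {..<m} Q). \<forall>i<m. \<bar>\<Sum>l\<le>i. y l\<bar> < \<delta>} \<in> sets (PiM {..<m} Q)"
proof -
  have "(\<lambda>y. \<Sum>l\<le>i. y l) \<in> borel_measurable (PiM {..<m} Q)" if "i < m" for i
    using that assms by (intro borel_measurable_sum)
      (auto intro!: measurable_PiM_component_rev simp: measurable_ident_sets)
  then show ?thesis
    by measurable
qed

lemma emeasure_PiM_partial_sums_bounded_le: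
  fixes Q :: "nat \<Rightarrow> real measure"
  assumes prob: "\<And>i. prob_space (Q i)" and sets: "\<And>i. sets (Q i) = sets borel"
    and interval: "\<And>i c. i < n \<Longrightarrow> emeasure (Q i) {z. \<bar>c + z\<bar> < \<delta>} \<le> ennreal (b i)"
  shows "emeasure (PiM {..<n} Q) {y \<in> space (PiM {..<n} Q). \<forall>i<n. \<bar>\<Sum>l\<le>i. y l\<bar> < \<delta>}
          \<le> (\<Prod>i<n. ennreal (b i))"
  using interval
proof (induction n)
  case 0
  interpret prob_space "PiM {..<0} Q"
    by (rule prob_space_PiM) (auto intro: prob)
  show ?case
    using emeasure_le_1 by simp
next
  case (Suc n)
  interpret product_prob_space Q
    by (simp add: prob product_prob_space_def product_sigma_finite_def prob_space_imp_sigma_finite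
        prob_space_axioms_def prob_space.emeasure_space_1 product_prob_space_axioms_def)
  have [simp]: "space (Q i) = UNIV" for i
    using sets sets_eq_imp_space_eq by fastforce
  define E where "E m = {y \<in> space (PiM {..<m} Q). \<forall>i<m. \<bar>\<Sum>l\<le>i. y l\<bar> < \<delta>}" for m
  have E_sets: "E m \<in> sets (PiM {..<m} Q)" for m
    unfolding E_def using sets by (rule sets_PiM_partial_sums_bounded)
  define B where "B x = {z. \<bar>(\<Sum>l<n. x l) + z\<bar> < \<delta>}" for x :: "nat \<Rightarrow> real"
  have E_Suc: "indicator (E (Suc n)) (x(n := z)) = (indicator (E n) x * indicator (B x) z :: ennreal)"
    if x: "x \<in> space (PiM {..<n} Q)" for x z
  proof -
    have "x(n := z) \<in> space (PiM {..<Suc n} Q)"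
      using x by (auto simp: space_PiM PiE_def extensional_def)
    moreover have "(\<Sum>l\<le>i. (x(n := z)) l) = (\<Sum>l\<le>i. x l)" if "i < n" for i
      using that by (intro sum.cong) auto
    moreover have "(\<Sum>l\<le>n. (x(n := z)) l) = (\<Sum>l<n. x l) + z"
      by (simp add: lessThan_Suc_atMost[symmetric])
    ultimately have "x(n := z) \<in> E (Suc n) \<longleftrightarrow> x \<in> E n \<and> z \<in> B x"
      using x by (auto simp: E_def B_def less_Suc_eq)
    then show ?thesis
      by (simp add: indicator_def)
  qed
  have "emeasure (PiM {..<Suc n} Q) (E (Suc n))
      = (\<integral>\<^sup>+ x. \<integral>\<^sup>+ z. indicator (E (Suc n)) (x(n := z)) \<partial>Q n \<partial>PiM {..<n} Q)"
    using E_sets[of "Suc n"] by (simp add: lessThan_Suc product_nn_integral_insert flip: nn_integral_indicator)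
  also have "\<dots> \<le> (\<integral>\<^sup>+ x. indicator (E n) x * ennreal (b n) \<partial>PiM {..<n} Q)"
  proof (rule nn_integral_mono)
    fix x assume x: "x \<in> space (PiM {..<n} Q)"
    have "B x \<in> sets (Q n)"
      unfolding sets B_def by measurable
    then have "(\<integral>\<^sup>+ z. indicator (E (Suc n)) (x(n := z)) \<partial>Q n) = indicator (E n) x * emeasure (Q n) (B x)"
      by (simp add: E_Suc[OF x] nn_integral_cmult flip: nn_integral_indicator)
    also have "\<dots> \<le> indicator (E n) x * ennreal (b n)"
      unfolding B_def by (intro mult_left_mono Suc.prems) auto
    finally show "(\<integral>\<^sup>+ z. indicator (E (Suc n)) (x(n := z)) \<partial>Q n) \<le> indicator (E n) x * ennreal (b n)" .
  qed
  also have "\<dots> = emeasure (PiM {..<n} Q) (E n) * ennreal (b n)"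
    using E_sets by (simp add: nn_integral_multc)
  also have "\<dots> \<le> (\<Prod>i<n. ennreal (b i)) * ennreal (b n)"
    using Suc unfolding E_def by (intro mult_right_mono) auto
  finally show ?case
    by (simp add: E_def mult.commute)
qed

lemma emeasure_distr_normal_interval_le:
  assumes X: "distributed M lborel X (\<lambda>x. ennreal (normal_density 0 (sqrt s) x))"
    and "0 < s" and "0 < \<delta>"
  shows "emeasure (distr M borel X) {z. \<bar>c + z\<bar> < \<delta>} \<le> ennreal (2 * \<delta> / sqrt (2 * pi * s))"
proof -
  have "distr M borel X = distr M lborel X"
    by (rule distr_cong) auto
  also have "\<dots> = density lborel (\<lambda>x. ennreal (normal_density 0 (sqrt s) x))"
    using X by (simp add: distributed_def)
  finally have law: "distr M borel X = density lborel (\<lambda>x. ennreal (normal_density 0 (sqrt s) x))" .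
  have interval: "{z. \<bar>c + z\<bar> < \<delta>} = {-c-\<delta><..<\<delta>-c}"
    by auto
  have "emeasure (distr M borel X) {z. \<bar>c + z\<bar> < \<delta>}
      = (\<integral>\<^sup>+ x. ennreal (normal_density 0 (sqrt s) x) * indicator {-c-\<delta><..<\<delta>-c} x \<partial>lborel)"
    unfolding law interval by (rule emeasure_density) auto
  also have "\<dots> \<le> (\<integral>\<^sup>+ x. ennreal (1 / sqrt (2 * pi * s)) * indicator {-c-\<delta><..<\<delta>-c} x \<partial>lborel)"
  proof (rule nn_integral_mono)
    fix x
    have "normal_density 0 (sqrt s) x \<le> 1 / sqrt (2 * pi * s)"
      using \<open>0 < s\<close> by (simp add: normal_density_def divide_right_mono)
    then show "ennreal (normal_density 0 (sqrt s) x) * indicator {-c-\<delta><..<\<delta>-c} x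
        \<le> ennreal (1 / sqrt (2 * pi * s)) * indicator {-c-\<delta><..<\<delta>-c} x"
      by (intro mult_right_mono ennreal_leI) auto
  qed
  also have "\<dots> = ennreal (2 * \<delta> / sqrt (2 * pi * s))"
    using assms by (simp add: nn_integral_cmult_indicator flip: ennreal_mult'')
  finally show ?thesis .
qed

lemma (in prob_space) emeasure_partial_sums_bounded_le:
  fixes Y :: "nat \<Rightarrow> 'a \<Rightarrow> real"
  assumes indep: "indep_vars (\<lambda>_. borel) Y {..<n}" and rv: "\<And>i. i < n \<Longrightarrow> random_variable borel (Y i)"
    and interval: "\<And>i c. i < n \<Longrightarrow> emeasure (distr M borel (Y i)) {z. \<bar>c + z\<bar> < \<delta>} \<le> ennreal (b i)"
  shows "emeasure M {\<omega>\<in>space M. \<forall>i<n. \<bar>\<Sum>l\<le>i. Y l \<omega>\<bar> < \<delta>} \<le> (\<Prod>i<n. ennreal (b i))"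
proof (cases "n = 0")
  case True
  then show ?thesis
    by (simp add: emeasure_le_1)
next
  case False
  define Q where "Q i = (if i < n then distr M borel (Y i) else return borel 0)" for i
  have Q_sets: "sets (Q i) = sets borel" for i
    by (simp add: Q_def)
  have "distr M (PiM {..<n} (\<lambda>_. borel)) (\<lambda>x. \<lambda>i\<in>{..<n}. Y i x) = PiM {..<n} (\<lambda>i. distr M borel (Y i))"
    using indep rv False by (subst indep_vars_iff_distr_eq_PiM'[symmetric]) auto
  also have "\<dots> = PiM {..<n} Q"
    by (rule PiM_cong) (auto simp: Q_def)
  finally have joint: "distr M (PiM {..<n} (\<lambda>_. borel)) (\<lambda>x. \<lambda>i\<in>{..<n}. Y i x) = PiM {..<n} Q" .
  define E where "E = {y \<in> space (PiM {..<n} Q). \<forall>i<n. \<bar>\<Sum>l\<le>i. y l\<bar> < \<delta>}"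
  have space_Q: "space (PiM {..<n} Q) = space (PiM {..<n} (\<lambda>_. borel :: real measure))"
    by (simp add: space_PiM Q_sets sets_eq_imp_space_eq[OF Q_sets])
  have E_sets: "E \<in> sets (PiM {..<n} (\<lambda>_. borel :: real measure))"
    unfolding E_def space_Q by (rule sets_PiM_partial_sums_bounded) simp
  have "{\<omega>\<in>space M. \<forall>i<n. \<bar>\<Sum>l\<le>i. Y l \<omega>\<bar> < \<delta>} = (\<lambda>x. \<lambda>i\<in>{..<n}. Y i x) -` E \<inter> space M"
  proof -
    have "(\<Sum>l\<le>i. (\<lambda>i\<in>{..<n}. Y i \<omega>) l) = (\<Sum>l\<le>i. Y l \<omega>)" if "i < n" for \<omega> i
      using that by (intro sum.cong) auto
    moreover have "(\<lambda>i\<in>{..<n}. Y i \<omega>) \<in> space (PiM {..<n} Q)" for \<omega>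
      by (simp add: space_PiM sets_eq_imp_space_eq[OF Q_sets])
    ultimately show ?thesis
      by (auto simp: E_def)
  qed
  also have "emeasure M \<dots> = emeasure (PiM {..<n} Q) E"
    using rv E_sets by (subst joint[symmetric], subst emeasure_distr) (auto intro!: measurable_restrict)
  also have "\<dots> \<le> (\<Prod>i<n. ennreal (b i))"
    unfolding E_def
  proof (rule emeasure_PiM_partial_sums_bounded_le)
    show "prob_space (Q i)" for i
      by (auto simp: Q_def intro!: prob_space_distr rv prob_space_return)
  qed (simp_all add: Q_sets Q_def interval)
  finally show ?thesis .
qed

lemma std_brownian_motion_small_ball_le:
  assumes bm: "std_brownian_motion M xi" and "0 < \<delta>" and sorted: "sorted_wrt (<) (0 # ss)"
  shows "emeasure M {\<omega>\<in>space M. \<forall>s\<in>set ss. \<bar>xi s \<omega>\<bar> < \<delta>}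
           \<le> ennreal (gap_prod (\<lambda>u. 2 * \<delta> / sqrt (2 * pi * u)) 0 ss)"
proof -
  interpret prob_space M
    using bm by (rule std_brownian_motion_prob_space)
  define ts where "ts = 0 # ss"
  define n where "n = length ss"
  define Y where "Y i \<omega> = xi (ts ! Suc i) \<omega> - xi (ts ! i) \<omega>" for i \<omega>
  define b where "b i = 2 * \<delta> / sqrt (2 * pi * (ts ! Suc i - ts ! i))" for i
  have ts_nonneg: "\<forall>u\<in>set ts. 0 \<le> u"
    using sorted by (auto simp: ts_def intro: less_imp_le)
  have ts_less: "ts ! i < ts ! Suc i" if "i < n" for i
    using sorted_wrt_nth_less[OF sorted, of i "Suc i"] that by (simp add: ts_def n_def)
  have len_ts: "length ts = Suc n"
    by (simp add: ts_def n_def)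
  have ts_nth_nonneg: "0 \<le> ts ! i" if "i \<le> n" for i
    using ts_nonneg nth_mem[of i ts] that len_ts by simp
  have Y_rv: "random_variable borel (Y i)" if "i < n" for i
    unfolding Y_def using std_brownian_motion_measurable[OF bm] ts_nth_nonneg that by simp
  have "emeasure (distr M borel (Y i)) {z. \<bar>c + z\<bar> < \<delta>} \<le> ennreal (b i)" if "i < n" for i c
  proof -
    have "distributed M lborel (Y i) (\<lambda>x. ennreal (normal_density 0 (sqrt (ts ! Suc i - ts ! i)) x))"
      unfolding Y_def using that by (intro std_brownian_motion_increment_distributed[OF bm] ts_nth_nonneg ts_less) simp_all
    from emeasure_distr_normal_interval_le[OF this _ \<open>0 < \<delta>\<close>] ts_less[OF that]
    show ?thesis
      by (simp add: b_def)
  qed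
  moreover have "indep_vars (\<lambda>_. borel) Y {..<n}"
    using std_brownian_motion_increments_indep[OF bm sorted[folded ts_def] ts_nonneg] len_ts
    by (simp add: Y_def[abs_def])
  ultimately have "emeasure M {\<omega>\<in>space M. \<forall>i<n. \<bar>\<Sum>l\<le>i. Y l \<omega>\<bar> < \<delta>} \<le> (\<Prod>i<n. ennreal (b i))"
    using Y_rv by (intro emeasure_partial_sums_bounded_le)
  moreover have "{\<omega>\<in>space M. \<forall>s\<in>set ss. \<bar>xi s \<omega>\<bar> < \<delta>} = {\<omega>\<in>space M. \<forall>i<n. \<bar>\<Sum>l\<le>i. Y l \<omega>\<bar> < \<delta>}"
  proof -
    have "(\<Sum>l\<le>i. Y l \<omega>) = xi (ss ! i) \<omega>" if "\<omega> \<in> space M" for \<omega> i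
    proof -
      have "(\<Sum>l\<le>i. Y l \<omega>) = xi (ts ! Suc i) \<omega> - xi (ts ! 0) \<omega>"
        unfolding Y_def lessThan_Suc_atMost[symmetric] by (rule sum_lessThan_telescope)
      then show ?thesis
        using std_brownian_motion_start[OF bm that] by (simp add: ts_def)
    qed
    then show ?thesis
      by (auto simp: all_set_conv_all_nth n_def)
  qed
  moreover have "(\<Prod>i<n. ennreal (b i)) = ennreal (gap_prod (\<lambda>u. 2 * \<delta> / sqrt (2 * pi * u)) 0 ss)"
  proof -
    have "0 \<le> b i" if "i < n" for i
      using ts_less[OF that] \<open>0 < \<delta>\<close> by (simp add: b_def)
    then have "(\<Prod>i<n. ennreal (b i)) = ennreal (\<Prod>i<n. b i)"
      by (auto intro!: prod_ennreal)
    then show ?thesis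
      by (simp add: gap_prod_conv_prod_nth b_def ts_def n_def)
  qed
  ultimately show ?thesis
    by simp
qed

lemma prod_indicator:
  "finite I \<Longrightarrow> (\<Prod>i\<in>I. indicator (A i) x :: 'b::comm_semiring_1) = indicator (\<Inter>i\<in>I. A i) x"
  by (induction I rule: finite_induct) (auto simp: indicator_def)

lemma std_brownian_motion_grid_small_ball_le:
  assumes bm: "std_brownian_motion M xi" and "0 < \<delta>" and "0 < h" and sorted: "sorted_wrt (<) (0 # js)"
  shows "emeasure M {\<omega>\<in>space M. \<forall>j\<in>set js. \<bar>xi (real j * h) \<omega>\<bar> < \<delta>}
           \<le> ennreal (gap_prod (\<lambda>g. 2 * \<delta> / sqrt (2 * pi * (real g * h))) 0 js)"
proof -
  define ss where "ss = map (\<lambda>j. real j * h) js"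
  have "sorted_wrt (<) (0 # ss)"
    using sorted \<open>0 < h\<close> by (auto simp: ss_def sorted_wrt_map elim!: sorted_wrt_mono_rel[rotated])
  then have "emeasure M {\<omega>\<in>space M. \<forall>s\<in>set ss. \<bar>xi s \<omega>\<bar> < \<delta>}
      \<le> ennreal (gap_prod (\<lambda>u. 2 * \<delta> / sqrt (2 * pi * u)) 0 ss)"
    by (rule std_brownian_motion_small_ball_le[OF bm \<open>0 < \<delta>\<close>])
  also have "gap_prod (\<lambda>u. 2 * \<delta> / sqrt (2 * pi * u)) 0 ss = gap_prod (\<lambda>g. 2 * \<delta> / sqrt (2 * pi * (real g * h))) 0 js"
    using gap_prod_map[OF sorted, of "\<lambda>j. real j * h"] by (simp add: ss_def o_def of_nat_diff left_diff_distrib)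
  finally show ?thesis
    by (simp add: ss_def)
qed

lemma std_brownian_motion_grid_moment_le:
  assumes bm: "std_brownian_motion M xi" and "0 < \<delta>" and "0 < h" and "0 \<le> a"
    and sorted: "sorted_wrt (<) (0 # js)" and js: "set js \<subseteq> {..N}"
  shows "(\<integral>\<^sup>+\<omega>. (\<Prod>j\<in>set js. ennreal a * indicator {-\<delta><..<\<delta>} (xi (real j * h) \<omega>)) \<partial>M)
    \<le> ennreal (exp (real N * h / 2) *
         gap_prod (\<lambda>g. a * (2 * \<delta> / sqrt (2 * pi * (real g * h))) * exp (- (real g * h) / 2)) 0 js)"
proof -
  define S where "S = {\<omega>\<in>space M. \<forall>j\<in>set js. \<bar>xi (real j * h) \<omega>\<bar> < \<delta>}"
  define pf where "pf g = a * (2 * \<delta> / sqrt (2 * pi * (real g * h)))" for g :: nat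
  have [measurable]: "xi (real j * h) \<in> borel_measurable M" for j
    using std_brownian_motion_measurable[OF bm] \<open>0 < h\<close> by simp
  have "S \<in> sets M"
    unfolding S_def by measurable
  have "card (set js) = length js"
    using sorted by (simp add: strict_sorted_iff distinct_card)
  have "(\<Prod>j\<in>set js. ennreal a * indicator {-\<delta><..<\<delta>} (xi (real j * h) \<omega>))
      = ennreal a ^ length js * indicator S \<omega>" if "\<omega> \<in> space M" for \<omega>
  proof -
    have "(\<Prod>j\<in>set js. indicator {-\<delta><..<\<delta>} (xi (real j * h) \<omega>) :: ennreal)
        = (\<Prod>j\<in>set js. indicator {\<omega>. \<bar>xi (real j * h) \<omega>\<bar> < \<delta>} \<omega>)"
      by (intro prod.cong) (auto simp: indicator_def abs_less_iff)
    also have "\<dots> = indicator S \<omega>"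
      using that by (simp add: prod_indicator S_def indicator_def)
    finally show ?thesis
      using \<open>card (set js) = length js\<close> by (simp add: prod.distrib)
  qed
  then have "(\<integral>\<^sup>+\<omega>. (\<Prod>j\<in>set js. ennreal a * indicator {-\<delta><..<\<delta>} (xi (real j * h) \<omega>)) \<partial>M)
      = (\<integral>\<^sup>+\<omega>. ennreal a ^ length js * indicator S \<omega> \<partial>M)"
    by (rule nn_integral_cong)
  also have "\<dots> = ennreal a ^ length js * emeasure M S"
    using \<open>S \<in> sets M\<close> by (rule nn_integral_cmult_indicator)
  also have "\<dots> \<le> ennreal a ^ length js * ennreal (gap_prod (\<lambda>g. 2 * \<delta> / sqrt (2 * pi * (real g * h))) 0 js)"
    unfolding S_def by (intro mult_left_mono std_brownian_motion_grid_small_ball_le assms) simp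
  also have "\<dots> = ennreal (a ^ length js * gap_prod (\<lambda>g. 2 * \<delta> / sqrt (2 * pi * (real g * h))) 0 js)"
    using \<open>0 \<le> a\<close> by (simp add: ennreal_mult' ennreal_power)
  also have "\<dots> = ennreal (gap_prod pf 0 js)"
    using gap_prod_mult[of "\<lambda>_. a" "\<lambda>g. 2 * \<delta> / sqrt (2 * pi * (real g * h))" 0 js]
    by (simp add: pf_def[abs_def] gap_prod_const)
  also have "\<dots> \<le> ennreal (exp (real N * (h / 2)) * gap_prod (\<lambda>g. pf g * exp (- (real g * (h / 2)))) 0 js)"
    using \<open>0 \<le> a\<close> \<open>0 < \<delta>\<close> \<open>0 < h\<close>
    by (intro ennreal_leI gap_prod_le_exp_mult_weighted[OF sorted js]) (simp_all add: pf_def)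
  finally show ?thesis
    by (simp add: pf_def)
qed

section \<open>The renewal series\<close>

lemma sum_inverse_sqrt_le: "(\<Sum>g=1..M. 1 / sqrt (real g)) \<le> 2 * sqrt (real M)"
proof (induction M)
  case (Suc M)
  define a where "a = sqrt (real (Suc M))"
  define b where "b = sqrt (real M)"
  have "0 < a" "0 \<le> b" "a\<^sup>2 = b\<^sup>2 + 1"
    by (simp_all add: a_def b_def)
  then have "1 / a + 2 * b \<le> 2 * a"
    using sum_squares_ge_zero[of "a - b" 0] by (simp add: field_simps power2_eq_square)
  moreover have "(\<Sum>g=1..Suc M. 1 / sqrt (real g)) = (\<Sum>g=1..M. 1 / sqrt (real g)) + 1 / a"
    by (simp add: a_def)
  ultimately show ?case
    using Suc unfolding a_def b_def by linarith
qed simp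

lemma sum_power_greaterThan_le:
  fixes x :: real
  assumes "0 \<le> x" "x < 1"
  shows "(\<Sum>g\<in>{M<..N}. x ^ g) \<le> x ^ Suc M / (1 - x)"
proof (cases "Suc M \<le> N")
  case True
  have "(1 - x) * (\<Sum>g=Suc M..N. x ^ g) = x ^ Suc M - x ^ Suc N"
    by (rule sum_gp_multiplied[OF True])
  also have "\<dots> \<le> x ^ Suc M"
    using assms by simp
  finally show ?thesis
    using assms by (simp add: atLeastSucAtMost_greaterThanAtMost field_simps)
qed (use assms in simp)

lemma inverse_one_minus_exp_le:
  fixes h :: real
  assumes "0 < h"
  shows "1 / (1 - exp (- h / 2)) \<le> 1 + 2 / h"
proof -
  have "h / (h + 2) = 1 - 1 / (1 + h / 2)"
    using assms by (simp add: field_simps)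
  also have "\<dots> \<le> 1 - exp (- h / 2)"
    using exp_ge_add_one_self[of "h / 2"] assms by (simp add: exp_minus inverse_eq_divide frac_le)
  finally show ?thesis
    using assms by (simp add: field_simps)
qed

lemma sqrt_mult_sum_exp_inverse_sqrt_tail_le:
  fixes h :: real
  assumes "0 < h" and M: "1 \<le> (real M + 1) * h"
  shows "sqrt h * (\<Sum>g\<in>{M<..N}. exp (- (real g * h) / 2) / sqrt (real g)) \<le> (2 + h) * exp (- 1 / 2)"
proof -
  define x where "x = exp (- h / 2)"
  have x: "0 \<le> x" "x < 1"
    using \<open>0 < h\<close> by (auto simp: x_def)
  have "(\<Sum>g\<in>{M<..N}. exp (- (real g * h) / 2) / sqrt (real g)) \<le> (\<Sum>g\<in>{M<..N}. x ^ g / sqrt (real M + 1))"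
  proof (rule sum_mono)
    fix g assume "g \<in> {M<..N}"
    then have "1 / sqrt (real g) \<le> 1 / sqrt (real M + 1)"
      by (intro divide_left_mono) auto
    moreover have "exp (- (real g * h) / 2) = x ^ g"
      by (simp add: x_def flip: exp_of_nat_mult)
    ultimately show "exp (- (real g * h) / 2) / sqrt (real g) \<le> x ^ g / sqrt (real M + 1)"
      using mult_left_mono[of "1 / sqrt (real g)" "1 / sqrt (real M + 1)" "x ^ g"] x by simp
  qed
  also have "\<dots> = (\<Sum>g\<in>{M<..N}. x ^ g) / sqrt (real M + 1)"
    by (simp add: sum_divide_distrib)
  also have "\<dots> \<le> x ^ Suc M * (1 / (1 - x)) / sqrt (real M + 1)"
    using sum_power_greaterThan_le[OF x] by (intro divide_right_mono) simp_all
  also have "\<dots> \<le> exp (- 1 / 2) * (1 + 2 / h) * sqrt h"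
  proof -
    have "x ^ Suc M = exp (real (Suc M) * (- h / 2))"
      unfolding x_def by (rule exp_of_nat_mult[symmetric])
    also have "\<dots> \<le> exp (- 1 / 2)"
      using M by (simp add: field_simps)
    finally have x_pow: "x ^ Suc M \<le> exp (- 1 / 2)" .
    from x_pow inverse_one_minus_exp_le[OF \<open>0 < h\<close>]
    have "x ^ Suc M * (1 / (1 - x)) \<le> exp (- 1 / 2) * (1 + 2 / h)"
      unfolding x_def by (rule mult_mono) (use x in \<open>auto simp: x_def\<close>)
    moreover have "1 / sqrt (real M + 1) \<le> sqrt h"
      using M \<open>0 < h\<close> by (simp add: real_sqrt_divide[symmetric] field_simps real_le_rsqrt)
    ultimately have "x ^ Suc M * (1 / (1 - x)) * (1 / sqrt (real M + 1)) \<le> exp (- 1 / 2) * (1 + 2 / h) * sqrt h"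
      by (rule mult_mono) (use \<open>0 < h\<close> in auto)
    then show ?thesis
      by simp
  qed
  finally have "sqrt h * (\<Sum>g\<in>{M<..N}. exp (- (real g * h) / 2) / sqrt (real g))
      \<le> sqrt h * (exp (- 1 / 2) * (1 + 2 / h) * sqrt h)"
    by (rule mult_left_mono) (use \<open>0 < h\<close> in simp)
  also have "\<dots> = exp (- 1 / 2) * (1 + 2 / h) * (sqrt h * sqrt h)"
    by (simp only: ac_simps)
  also have "\<dots> = (2 + h) * exp (- 1 / 2)"
    using \<open>0 < h\<close> by (simp add: field_simps)
  finally show ?thesis .
qed

lemma sqrt_mult_sum_exp_inverse_sqrt_le:
  fixes h :: real
  assumes "0 < h"
  shows "sqrt h * (\<Sum>g=1..N. exp (- (real g * h) / 2) / sqrt (real g)) \<le> 2 + (2 + h) * exp (- 1 / 2)"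
proof -
  \<comment> \<open>Up to \<open>1/h\<close> the exponential factor is at most 1; beyond it the terms decay geometrically.\<close>
  define M where "M = nat \<lfloor>1 / h\<rfloor>"
  define f where "f g = exp (- (real g * h) / 2) / sqrt (real g)" for g :: nat
  have "real M \<le> 1 / h"
    using \<open>0 < h\<close> by (simp add: M_def)
  moreover have "1 / h < real M + 1"
    using \<open>0 < h\<close> by (simp add: M_def; linarith)
  ultimately have "real M * h \<le> 1" "1 \<le> (real M + 1) * h"
    using \<open>0 < h\<close> by (simp_all add: field_simps)
  have "(\<Sum>g=1..N. f g) \<le> (\<Sum>g\<in>{1..M} \<union> {M<..N}. f g)"
    by (rule sum_mono2) (auto simp: f_def)
  also have "\<dots> = (\<Sum>g=1..M. f g) + (\<Sum>g\<in>{M<..N}. f g)"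
    by (rule sum.union_disjoint) auto
  finally have "sqrt h * (\<Sum>g=1..N. f g) \<le> sqrt h * ((\<Sum>g=1..M. f g) + (\<Sum>g\<in>{M<..N}. f g))"
    by (rule mult_left_mono) (simp add: less_imp_le \<open>0 < h\<close>)
  moreover have "sqrt h * (\<Sum>g=1..M. f g) \<le> 2"
  proof -
    have "(\<Sum>g=1..M. f g) \<le> (\<Sum>g=1..M. 1 / sqrt (real g))"
      using \<open>0 < h\<close> by (intro sum_mono) (simp add: f_def divide_right_mono)
    also have "\<dots> \<le> 2 * sqrt (real M)"
      by (rule sum_inverse_sqrt_le)
    finally have "sqrt h * (\<Sum>g=1..M. f g) \<le> sqrt h * (2 * sqrt (real M))"
      by (rule mult_left_mono) (use \<open>0 < h\<close> in simp)
    also have "\<dots> = 2 * sqrt (h * real M)"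
      by (simp add: real_sqrt_mult)
    also have "\<dots> \<le> 2"
      using \<open>real M * h \<le> 1\<close> by (simp add: mult.commute)
    finally show ?thesis .
  qed
  moreover have "sqrt h * (\<Sum>g\<in>{M<..N}. f g) \<le> (2 + h) * exp (- 1 / 2)"
    unfolding f_def by (rule sqrt_mult_sum_exp_inverse_sqrt_tail_le) fact+
  ultimately show ?thesis
    unfolding f_def distrib_left by linarith
qed

lemma small_ball_weight_factor_le:
  fixes \<delta> h :: real
  assumes "0 < \<delta>" "0 < h" "h \<le> 2 * \<delta> / 25"
  shows "(exp (h / (4 * \<delta>)) - 1) * (2 * \<delta>) / sqrt (2 * pi * h) \<le> 10 / 49 * sqrt h"
proof -
  define u where "u = h / (4 * \<delta>)"
  have "u \<le> 1 / 50"
    using assms by (simp add: u_def field_simps)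
  have "exp u - 1 \<le> u * exp u"
    using exp_ge_add_one_self[of "- u"] by (simp add: exp_minus field_simps)
  have "49 / 50 \<le> exp (- u)"
    using exp_ge_add_one_self[of "- u"] \<open>u \<le> 1 / 50\<close> by simp
  then have "exp u \<le> 50 / 49"
    by (simp add: exp_minus field_simps)
  have "5 / 2 \<le> sqrt (2 * pi)"
    using pi_approx(1) real_sqrt_le_mono[of "25 / 4" "2 * pi"] by (simp add: real_sqrt_divide)
  have "(exp u - 1) * (2 * \<delta>) / sqrt (2 * pi * h) \<le> u * exp u * (2 * \<delta>) / sqrt (2 * pi * h)"
    using \<open>exp u - 1 \<le> u * exp u\<close> assms by (intro divide_right_mono mult_right_mono) auto
  also have "\<dots> = exp u * sqrt h / (2 * sqrt (2 * pi))"
    using assms real_sqrt_mult_self[of h] by (simp add: u_def real_sqrt_mult field_simps)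
  also have "\<dots> \<le> 50 / 49 * sqrt h / (2 * (5 / 2))"
    using \<open>exp u \<le> 50 / 49\<close> \<open>5 / 2 \<le> sqrt (2 * pi)\<close> \<open>0 < h\<close> by (intro frac_le mult_right_mono) auto
  finally show ?thesis
    by (simp add: u_def)
qed

lemma sum_small_ball_weights_le:
  fixes \<delta> h :: real
  assumes "0 < \<delta>" "0 < h" "h \<le> 1 / 100" "h \<le> 2 * \<delta> / 25"
  shows "(\<Sum>g=1..N. (exp (h / (4 * \<delta>)) - 1) * (2 * \<delta> / sqrt (2 * pi * (real g * h)))
            * exp (- (real g * h) / 2)) \<le> 2 / 3"
proof -
  define C where "C = (exp (h / (4 * \<delta>)) - 1) * (2 * \<delta>) / sqrt (2 * pi * h)"
  define S where "S = (\<Sum>g=1..N. exp (- (real g * h) / 2) / sqrt (real g))"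
  have "0 \<le> S"
    unfolding S_def by (intro sum_nonneg) auto
  have "exp (- 1 / 2 :: real) \<le> 8 / 13"
    using exp_lower_Taylor_quadratic[of "1 / 2"] by (simp add: exp_minus power2_eq_square field_simps)
  have "(\<Sum>g=1..N. (exp (h / (4 * \<delta>)) - 1) * (2 * \<delta> / sqrt (2 * pi * (real g * h))) * exp (- (real g * h) / 2))
      = (\<Sum>g=1..N. C * (exp (- (real g * h) / 2) / sqrt (real g)))"
  proof (rule sum.cong)
    fix g
    have "sqrt (2 * pi * (real g * h)) = sqrt (2 * pi * h) * sqrt (real g)"
      by (simp add: ac_simps flip: real_sqrt_mult)
    then show "(exp (h / (4 * \<delta>)) - 1) * (2 * \<delta> / sqrt (2 * pi * (real g * h))) * exp (- (real g * h) / 2)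
        = C * (exp (- (real g * h) / 2) / sqrt (real g))"
      by (simp add: C_def)
  qed simp
  also have "\<dots> = C * S"
    by (simp add: S_def sum_distrib_left)
  also have "\<dots> \<le> 10 / 49 * (sqrt h * S)"
    using mult_right_mono[OF small_ball_weight_factor_le[OF \<open>0 < \<delta>\<close> \<open>0 < h\<close> assms(4)] \<open>0 \<le> S\<close>]
    by (simp add: C_def)
  also have "\<dots> \<le> 10 / 49 * (2 + (2 + 1 / 100) * (8 / 13))"
  proof -
    have "sqrt h * S \<le> 2 + (2 + h) * exp (- 1 / 2)"
      unfolding S_def by (rule sqrt_mult_sum_exp_inverse_sqrt_le) fact
    also have "\<dots> \<le> 2 + (2 + 1 / 100) * (8 / 13)"
      using assms \<open>exp (- 1 / 2) \<le> 8 / 13\<close> by (intro add_left_mono mult_mono) auto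
    finally show ?thesis
      by (rule mult_left_mono) simp
  qed
  also have "\<dots> \<le> 2 / 3"
    by simp
  finally show ?thesis .
qed

section \<open>Riemann sums of the occupation time\<close>

definition riemann_occupation :: "(real \<Rightarrow> 'b) \<Rightarrow> 'b set \<Rightarrow> real \<Rightarrow> nat \<Rightarrow> real" where
  "riemann_occupation f U t N = t / real N * (\<Sum>j\<in>{0<..N}. indicator U (f (real j * (t / real N))))"

lemma nn_integral_riemann_step_function:
  assumes "0 \<le> t"
  shows "(\<integral>\<^sup>+ s. (\<Sum>j\<in>{0<..N}. ennreal (indicator U (f (real j * (t / real N))))
             * indicator {(real j - 1) * (t / real N)<..real j * (t / real N)} s) \<partial>lborel)
         = ennreal (riemann_occupation f U t N)"
proof -
  define c where "c j = (indicator U (f (real j * (t / real N))) :: real)" for j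
  have "emeasure lborel {(real j - 1) * (t / real N)<..real j * (t / real N)} = ennreal (t / real N)" for j
  proof -
    have "(real j - 1) * (t / real N) \<le> real j * (t / real N)"
      using assms by (intro mult_right_mono) auto
    moreover have "real j * (t / real N) - (real j - 1) * (t / real N) = t / real N"
      by (simp add: left_diff_distrib diff_divide_distrib)
    ultimately show ?thesis
      by simp
  qed
  then have "(\<integral>\<^sup>+ s. (\<Sum>j\<in>{0<..N}. ennreal (c j) * indicator {(real j - 1) * (t / real N)<..real j * (t / real N)} s) \<partial>lborel)
      = (\<Sum>j\<in>{0<..N}. ennreal (c j) * ennreal (t / real N))"
    by (subst nn_integral_sum) (auto simp: nn_integral_cmult_indicator)
  also have "\<dots> = (\<Sum>j\<in>{0<..N}. ennreal (c j * (t / real N)))"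
    by (simp add: c_def flip: ennreal_mult')
  also have "\<dots> = ennreal (riemann_occupation f U t N)"
    using assms by (subst sum_ennreal) (simp_all add: c_def riemann_occupation_def sum_distrib_left mult.commute)
  finally show ?thesis
    by (simp add: c_def)
qed

lemma eventually_grid_point_in_open:
  fixes f :: "real \<Rightarrow> 'b::topological_space"
  assumes f: "continuous_on {0..} f" and U: "open U" and s: "0 < s \<and> s \<le> t \<and> f s \<in> U"
  shows "eventually (\<lambda>N. \<exists>j\<in>{0<..N}. (real j - 1) * (t / real N) < s \<and> s \<le> real j * (t / real N)
           \<and> f (real j * (t / real N)) \<in> U) sequentially"
proof -
  have "(f \<longlongrightarrow> f s) (at s within {0..})"
    using f s by (simp add: continuous_on_def)
  then have "eventually (\<lambda>x. f x \<in> U) (at s within {0..})"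
    using U s by (intro topological_tendstoD) auto
  then obtain d where "0 < d" and d: "\<And>x. 0 \<le> x \<Longrightarrow> dist x s < d \<Longrightarrow> f x \<in> U"
    using s unfolding eventually_at by (metis atLeast_iff dist_self)
  show ?thesis
  proof (rule eventually_sequentiallyI)
    fix N assume N: "nat \<lceil>t / d\<rceil> + 1 \<le> N"
    define h where "h = t / real N"
    have "0 < t"
      using s by simp
    have "t / d < real N" "0 < real N"
      using N by linarith+
    then have "0 < h" "h < d"
      using \<open>0 < t\<close> \<open>0 < d\<close> by (simp_all add: h_def field_simps)
    define j where "j = nat \<lceil>s / h\<rceil>"
    have "s / h \<le> real j" "real j < s / h + 1" "0 < j"
      using s \<open>0 < h\<close> by (auto simp: j_def) linarith+
    then have j: "s \<le> real j * h" "real j * h < s + h"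
      using \<open>0 < h\<close> by (simp_all add: field_simps)
    have "s / h \<le> real N"
      using mult_right_mono[of s t "real N"] s \<open>0 < real N\<close> \<open>0 < t\<close> by (simp add: h_def field_simps)
    then have "j \<le> N"
      by (simp add: j_def ceiling_le_iff nat_le_iff)
    moreover have "f (real j * h) \<in> U"
      using d[of "real j * h"] j \<open>h < d\<close> s by (simp add: dist_real_def)
    ultimately show "\<exists>j\<in>{0<..N}. (real j - 1) * (t / real N) < s \<and> s \<le> real j * (t / real N)
        \<and> f (real j * (t / real N)) \<in> U"
      using j \<open>0 < j\<close> unfolding h_def[symmetric] by (intro bexI[of _ j]) (auto simp: algebra_simps)
  qed
qed

lemma nn_integral_indicator_comp_le_liminf_riemann_occupation:
  fixes f :: "real \<Rightarrow> 'b::topological_space"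
  assumes f: "continuous_on {0..} f" and U: "open U" and "0 < t"
  shows "(\<integral>\<^sup>+ s. ennreal (indicator {0..t} s * indicator U (f s)) \<partial>lborel)
     \<le> liminf (\<lambda>N. ennreal (riemann_occupation f U t N))"
proof -
  define c where "c N j = (indicator U (f (real j * (t / real N))) :: real)" for N j :: nat
  define I where "I N j = {(real j - 1) * (t / real N)<..real j * (t / real N)}" for N j :: nat
  define g where "g N s = (\<Sum>j\<in>{0<..N}. ennreal (c N j) * indicator (I N j) s)" for N s
  have g_measurable: "g N \<in> borel_measurable lborel" for N
    unfolding g_def I_def by measurable
  have integral_g: "(\<lambda>N. \<integral>\<^sup>+ s. g N s \<partial>lborel) = (\<lambda>N. ennreal (riemann_occupation f U t N))"
    unfolding g_def c_def I_def nn_integral_riemann_step_function[OF less_imp_le[OF \<open>0 < t\<close>]] ..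
  have "ennreal (indicator {0..t} s * indicator U (f s)) \<le> liminf (\<lambda>N. g N s)" if "s \<noteq> 0" for s
  proof (cases "0 < s \<and> s \<le> t \<and> f s \<in> U")
    case True
    then have "eventually (\<lambda>N. \<exists>j\<in>{0<..N}. s \<in> I N j \<and> c N j = 1) sequentially"
      using eventually_grid_point_in_open[OF f U True] by (auto simp: I_def c_def elim!: eventually_mono)
    then have "eventually (\<lambda>N. 1 \<le> g N s) sequentially"
    proof (rule eventually_mono)
      fix N assume "\<exists>j\<in>{0<..N}. s \<in> I N j \<and> c N j = 1"
      then obtain j where "j \<in> {0<..N}" "s \<in> I N j" "c N j = 1"
        by blast
      then have "ennreal (c N j) * indicator (I N j) s \<le> g N s"
        unfolding g_def by (intro member_le_sum) auto
      then show "1 \<le> g N s"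
        using \<open>s \<in> I N j\<close> \<open>c N j = 1\<close> by simp
    qed
    then show ?thesis
      using True by (simp add: Liminf_bounded)
  next
    case False
    then have zero: "indicator {0..t} s * indicator U (f s) = (0 :: real)"
      using that by (auto simp: indicator_def)
    show ?thesis
      unfolding zero by simp
  qed
  then have "(\<integral>\<^sup>+ s. ennreal (indicator {0..t} s * indicator U (f s)) \<partial>lborel)
      \<le> (\<integral>\<^sup>+ s. liminf (\<lambda>N. g N s) \<partial>lborel)"
    using AE_lborel_singleton[of 0] by (intro nn_integral_mono_AE) (auto elim!: eventually_mono)
  also have "\<dots> \<le> liminf (\<lambda>N. \<integral>\<^sup>+ s. g N s \<partial>lborel)"
    by (rule nn_integral_liminf[OF g_measurable])
  finally show ?thesis
    unfolding integral_g .
qed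

lemma eventually_riemann_occupation_greater:
  fixes f :: "real \<Rightarrow> 'b::topological_space"
  assumes f: "continuous_on {0..} f" and U: "open U" and "0 < t" and "0 \<le> k"
    and less: "k < (LINT s:{0..t}|lborel. indicator U (f s))"
  shows "eventually (\<lambda>N. k < riemann_occupation f U t N) sequentially"
proof -
  define F where "F s = (indicator {0..t} s * indicator U (f s) :: real)" for s
  have F: "(LINT s:{0..t}|lborel. indicator U (f s)) = integral\<^sup>L lborel F"
    by (simp add: F_def[abs_def] set_lebesgue_integral_def)
  have "integrable lborel F"
    using less \<open>0 \<le> k\<close> not_integrable_integral_eq[of lborel F] by (auto simp: F)
  have "ennreal k < ennreal (integral\<^sup>L lborel F)"
    using less \<open>0 \<le> k\<close> by (intro ennreal_lessI) (auto simp: F)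
  also have "ennreal (integral\<^sup>L lborel F) = (\<integral>\<^sup>+ s. ennreal (F s) \<partial>lborel)"
    using \<open>integrable lborel F\<close> by (rule nn_integral_eq_integral[symmetric]) (simp add: F_def)
  also have "\<dots> \<le> liminf (\<lambda>N. ennreal (riemann_occupation f U t N))"
    unfolding F_def using f U \<open>0 < t\<close> by (rule nn_integral_indicator_comp_le_liminf_riemann_occupation)
  finally have "ennreal k < liminf (\<lambda>N. ennreal (riemann_occupation f U t N))" .
  then show ?thesis
    using \<open>0 \<le> k\<close> by (auto dest: less_LiminfD elim!: eventually_mono simp: ennreal_less_iff)
qed

lemma (in finite_measure) measure_le_of_eventually_mem:
  assumes B: "\<And>N. B N \<in> sets M" and E: "\<And>x. x \<in> E \<Longrightarrow> eventually (\<lambda>N. x \<in> B N) sequentially"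
    and bound: "eventually (\<lambda>N. emeasure M (B N) \<le> ennreal b) sequentially" and "0 \<le> b"
  shows "measure M E \<le> b"
proof (cases "E \<in> sets M")
  case True
  define C where "C m = (\<Inter>N\<in>{m..}. B N)" for m
  have C: "C m \<in> sets M" for m
    using B by (auto simp: C_def)
  have "E \<subseteq> (\<Union>m. C m)"
  proof
    fix x assume "x \<in> E"
    then obtain m where "\<forall>N\<ge>m. x \<in> B N"
      using E by (auto simp: eventually_sequentially)
    then show "x \<in> (\<Union>m. C m)"
      by (auto simp: C_def)
  qed
  then have "emeasure M E \<le> emeasure M (\<Union>m. C m)"
    using C by (intro emeasure_mono) auto
  also have "\<dots> = (SUP m. emeasure M (C m))"
    using C by (intro SUP_emeasure_incseq[symmetric]) (auto simp: incseq_def C_def)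
  also have "\<dots> \<le> ennreal b"
  proof (rule SUP_least)
    fix m
    have "eventually (\<lambda>N. m \<le> N \<and> emeasure M (B N) \<le> ennreal b) sequentially"
      using eventually_ge_at_top bound by (rule eventually_conj)
    then obtain N where "m \<le> N" "emeasure M (B N) \<le> ennreal b"
      by (auto simp: eventually_sequentially)
    then show "emeasure M (C m) \<le> ennreal b"
      using B by (auto simp: C_def intro: order_trans[OF emeasure_mono])
  qed
  finally show ?thesis
    using True \<open>0 \<le> b\<close> by (simp add: emeasure_eq_measure)
qed (simp add: measure_notin_sets \<open>0 \<le> b\<close>)

lemma ennreal_exp_mult_indicator:
  assumes "0 \<le> c"
  shows "ennreal (exp (c * indicator A x)) = 1 + ennreal (exp c - 1) * indicator A x"
proof -
  have "ennreal (exp c) = ennreal (1 + (exp c - 1))"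
    by simp
  also have "\<dots> = 1 + ennreal (exp c - 1)"
    using assms by (subst ennreal_plus) auto
  finally have "ennreal (exp c) = 1 + ennreal (exp c - 1)" .
  then show ?thesis
    by (simp add: indicator_def)
qed

lemma std_brownian_motion_grid_exp_moment_le:
  assumes bm: "std_brownian_motion M xi"
    and "0 < \<delta>" and "0 < h" and "h \<le> 1 / 100" and "h \<le> 2 * \<delta> / 25"
  shows "(\<integral>\<^sup>+\<omega>. (\<Prod>j\<in>{0<..N}. 1 + ennreal (exp (h / (4 * \<delta>)) - 1) * indicator {-\<delta><..<\<delta>} (xi (real j * h) \<omega>)) \<partial>M)
           \<le> ennreal (3 * exp (real N * h / 2))"
proof -
  define a where "a = exp (h / (4 * \<delta>)) - 1"
  define r where "r g = a * (2 * \<delta> / sqrt (2 * pi * (real g * h))) * exp (- (real g * h) / 2)" for g :: nat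
  have "0 \<le> a"
    using \<open>0 < \<delta>\<close> \<open>0 < h\<close> by (simp add: a_def)
  have [measurable]: "xi (real j * h) \<in> borel_measurable M" for j
    using std_brownian_motion_measurable[OF bm] \<open>0 < h\<close> by simp
  have R: "(\<Sum>g=1..N. r g) \<le> 2 / 3"
    unfolding r_def a_def using assms(2-) by (rule sum_small_ball_weights_le)
  have "(\<integral>\<^sup>+\<omega>. (\<Prod>j\<in>{0<..N}. 1 + ennreal a * indicator {-\<delta><..<\<delta>} (xi (real j * h) \<omega>)) \<partial>M)
      \<le> ennreal (exp (real N * h / 2) / (1 - (\<Sum>g=1..N. r g)))"
  proof (rule nn_integral_prod_one_plus_le)
    show "(\<Sum>g=1..N. r g) < 1"
      using R by simp
    show "0 \<le> r g" for g
      using \<open>0 \<le> a\<close> \<open>0 < \<delta>\<close> \<open>0 < h\<close> by (simp add: r_def)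
    show "(\<integral>\<^sup>+\<omega>. (\<Prod>j\<in>set js. ennreal a * indicator {-\<delta><..<\<delta>} (xi (real j * h) \<omega>)) \<partial>M)
        \<le> ennreal (exp (real N * h / 2) * gap_prod r 0 js)"
      if "sorted_wrt (<) (0 # js)" "set js \<subseteq> {..N}" for js
      unfolding r_def using bm \<open>0 < \<delta>\<close> \<open>0 < h\<close> \<open>0 \<le> a\<close> that
      by (rule std_brownian_motion_grid_moment_le)
  qed auto
  also have "\<dots> \<le> ennreal (3 * exp (real N * h / 2))"
    using R by (intro ennreal_leI) (simp add: field_simps)
  finally show ?thesis
    by (simp add: a_def)
qed

lemma std_brownian_motion_grid_occupation_tail_le:
  assumes bm: "std_brownian_motion M xi"
    and "0 < \<delta>" and "0 < h" and "h \<le> 1 / 100" and "h \<le> 2 * \<delta> / 25"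
  shows "emeasure M {\<omega>\<in>space M. k < h * (\<Sum>j\<in>{0<..N}. indicator {-\<delta><..<\<delta>} (xi (real j * h) \<omega>))}
           \<le> ennreal (3 * exp (real N * h / 2 - k / (4 * \<delta>)))"
proof -
  define \<theta> where "\<theta> = 1 / (4 * \<delta>)"
  define S where "S \<omega> = h * (\<Sum>j\<in>{0<..N}. indicator {-\<delta><..<\<delta>} (xi (real j * h) \<omega>))" for \<omega>
  have "0 < \<theta>"
    using \<open>0 < \<delta>\<close> by (simp add: \<theta>_def)
  have [measurable]: "xi (real j * h) \<in> borel_measurable M" for j
    using std_brownian_motion_measurable[OF bm] \<open>0 < h\<close> by simp
  have [measurable]: "S \<in> borel_measurable M"
    unfolding S_def by measurable
  have "emeasure M {\<omega>\<in>space M. k < S \<omega>} \<le> emeasure M {\<omega>\<in>space M. k \<le> S \<omega>}"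
    by (intro emeasure_mono) auto
  also have "\<dots> \<le> ennreal (exp (- \<theta> * k)) * (\<integral>\<^sup>+\<omega>. ennreal (exp (\<theta> * S \<omega>)) * indicator (space M) \<omega> \<partial>M)"
    using \<open>0 < \<theta>\<close> by (intro Chernoff_ineq_nn_integral_ge) auto
  also have "(\<integral>\<^sup>+\<omega>. ennreal (exp (\<theta> * S \<omega>)) * indicator (space M) \<omega> \<partial>M)
      = (\<integral>\<^sup>+\<omega>. (\<Prod>j\<in>{0<..N}. 1 + ennreal (exp (h / (4 * \<delta>)) - 1) * indicator {-\<delta><..<\<delta>} (xi (real j * h) \<omega>)) \<partial>M)"
  proof (rule nn_integral_cong)
    fix \<omega> assume "\<omega> \<in> space M"
    have "\<theta> * S \<omega> = (\<Sum>j\<in>{0<..N}. h / (4 * \<delta>) * indicator {-\<delta><..<\<delta>} (xi (real j * h) \<omega>))"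
      unfolding S_def \<theta>_def sum_distrib_left by (rule sum.cong) simp_all
    then have "ennreal (exp (\<theta> * S \<omega>))
        = (\<Prod>j\<in>{0<..N}. ennreal (exp (h / (4 * \<delta>) * indicator {-\<delta><..<\<delta>} (xi (real j * h) \<omega>))))"
      by (simp add: exp_sum prod_ennreal)
    also have "\<dots> = (\<Prod>j\<in>{0<..N}. 1 + ennreal (exp (h / (4 * \<delta>)) - 1) * indicator {-\<delta><..<\<delta>} (xi (real j * h) \<omega>))"
      using \<open>0 < \<delta>\<close> \<open>0 < h\<close> by (intro prod.cong refl ennreal_exp_mult_indicator) simp
    finally show "ennreal (exp (\<theta> * S \<omega>)) * indicator (space M) \<omega>
        = (\<Prod>j\<in>{0<..N}. 1 + ennreal (exp (h / (4 * \<delta>)) - 1) * indicator {-\<delta><..<\<delta>} (xi (real j * h) \<omega>))"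
      using \<open>\<omega> \<in> space M\<close> by simp
  qed
  also have "ennreal (exp (- \<theta> * k)) * \<dots> \<le> ennreal (exp (- \<theta> * k)) * ennreal (3 * exp (real N * h / 2))"
    by (intro mult_left_mono std_brownian_motion_grid_exp_moment_le[OF assms]) simp
  also have "\<dots> = ennreal (3 * exp (real N * h / 2 - k / (4 * \<delta>)))"
    by (simp add: \<theta>_def mult.left_commute flip: ennreal_mult' exp_add)
  finally show ?thesis
    by (simp add: S_def)
qed

lemma std_brownian_motion_riemann_occupation_tail:
  assumes bm: "std_brownian_motion M xi" and "0 < \<delta>" and "0 < t"
  shows "eventually (\<lambda>N. emeasure M {\<omega>\<in>space M. k < riemann_occupation (\<lambda>s. xi s \<omega>) {-\<delta><..<\<delta>} t N}
           \<le> ennreal (3 * exp (t / 2 - k / (4 * \<delta>)))) sequentially"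
proof -
  have "eventually (\<lambda>N. t / real N < 1 / 100) sequentially"
    and "eventually (\<lambda>N. t / real N < 2 * \<delta> / 25) sequentially"
    using \<open>0 < \<delta>\<close> by (auto intro: order_tendstoD(2)[OF lim_const_over_n])
  with eventually_gt_at_top[of 0] show ?thesis
  proof eventually_elim
    case (elim N)
    then show ?case
      using std_brownian_motion_grid_occupation_tail_le[OF bm \<open>0 < \<delta>\<close>, of "t / real N" k N] \<open>0 < t\<close>
      by (simp add: riemann_occupation_def)
  qed
qed

theorem lemma9:
  fixes M :: "'a measure" and xi :: "real \<Rightarrow> 'a \<Rightarrow> real"
    and \<delta> k t :: real
  assumes "std_brownian_motion M xi"
    and "\<delta> > 0" and "k > 0" and "t \<ge> 0"
  shows "measure M {\<omega> \<in> space M.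
            (LINT s:{0..t}|lborel. indicator {-\<delta><..<\<delta>} (xi s \<omega>)) > k}
         \<le> 3 * exp (t / 2 - k / (4 * \<delta>))"
proof (cases "t = 0")
  case True
  have "(LINT s:{0..0}|lborel. indicator {-\<delta><..<\<delta>} (xi s \<omega>)) = (0 :: real)" for \<omega>
    unfolding set_lebesgue_integral_def
    by (rule integral_eq_zero_AE) (use AE_lborel_singleton[of 0] in \<open>auto elim!: eventually_mono\<close>)
  then show ?thesis
    using True \<open>k > 0\<close> by simp
next
  case False
  then have "0 < t"
    using \<open>t \<ge> 0\<close> by simp
  interpret prob_space M
    using assms(1) by (rule std_brownian_motion_prob_space)
  have [measurable]: "xi (real j * (t / real N)) \<in> borel_measurable M" for j N
    using std_brownian_motion_measurable[OF assms(1)] \<open>0 < t\<close> by simp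
  show ?thesis
  proof (rule measure_le_of_eventually_mem)
    show "{\<omega>\<in>space M. k < riemann_occupation (\<lambda>s. xi s \<omega>) {-\<delta><..<\<delta>} t N} \<in> sets M" for N
      unfolding riemann_occupation_def by measurable
    show "eventually (\<lambda>N. \<omega> \<in> {\<omega>\<in>space M. k < riemann_occupation (\<lambda>s. xi s \<omega>) {-\<delta><..<\<delta>} t N}) sequentially"
      if "\<omega> \<in> {\<omega> \<in> space M. (LINT s:{0..t}|lborel. indicator {-\<delta><..<\<delta>} (xi s \<omega>)) > k}" for \<omega>
      using that std_brownian_motion_continuous[OF assms(1)] \<open>0 < t\<close> \<open>k > 0\<close>
        eventually_riemann_occupation_greater[of "\<lambda>s. xi s \<omega>" "{-\<delta><..<\<delta>}" t k]
      by auto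
  qed (use std_brownian_motion_riemann_occupation_tail[OF assms(1,2) \<open>0 < t\<close>] in simp_all)
qed

end
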